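(* For all integers $m,k,p\ge 0$, \begin{align*} &(-1)^{m+1}\sum_{i=0}^{m}\frac{(\ln 2)^i}{i!}\zeta(\bar 1,\{1\}_{m-i},p+3,\{1\}_k)+(-1)^{p+k+1}\sum_{i=0}^{k}\frac{(\ln 2)^i}{i!}\zeta(\bar 1,\{1\}_{k-i},p+3,\{1\}_m)\\ &=\frac{(-1)^m}{(m+1)!}(\ln 2)^{m+1}\zeta(\overline{p+3},\{1\}_k)+\frac{(-1)^{p+k}}{(k+1)!}(\ln 2)^{k+1}\zeta(\overline{p+3},\{1\}_m)\\ &\quad+\sum_{i=0}^{p}(-1)^i\zeta(\overline{2+i},\{1\}_m)\,\zeta(\overline{p+2-i},\{1\}_k). \end{align*}
   Context: For nonzero integers $s_1,\dots,s_k$, with $\operatorname{sgn}(s)=1$ if $s>0$ and $-1$ if $s<0$, the multiple zeta value is $\zeta(s_1,\dots,s_k)=\sum_{n_1>n_2>\cdots>n_k\ge 1}\prod_{j=1}^k n_j^{-|s_j|}\operatorname{sgn}(s_j)^{n_j}$. A barred entry $\bar q$ (e.g. $\bar 1$, $\overline{p+3}$) denotes the negative entry $-q$. The notation $\{1\}_d$ means the entry $1$ repeated $d$ times ($d=0$ means no entries). *)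

theory Defs
  imports Complex_Main
begin

text \<open>Truncated multiple zeta sum over N \<ge> n1 > n2 > ... > nk \<ge> 1 for signed
  (nonzero integer) entries: entry s contributes sgn(s)^n / n^|s|.\<close>
fun mzv_trunc :: "int list \<Rightarrow> nat \<Rightarrow> real" where
  "mzv_trunc [] N = 1"
| "mzv_trunc (s # ss) N =
     (\<Sum>n = 1..N. (of_int (sgn s)) ^ n / (real n) ^ (nat \<bar>s\<bar>) * mzv_trunc ss (n - 1))"

definition mzv :: "int list \<Rightarrow> real" where
  "mzv s = lim (\<lambda>N. mzv_trunc s N)"

end

theory Submission
  imports Defs "HOL-Analysis.Harmonic_Numbers"
begin

(* For s \<ge> 1 and positive entries ss, the power series
   F(s,ss,t) = \<Sum>n (-1)^n t^n / n^s * \<zeta>_(n-1)(ss), with \<zeta>_N the truncated sum,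
   converges at t = 1 to \<zeta>(-s, ss): the truncated sums grow only logarithmically, so the
   coefficients form a convergent alternating series. Hence F(s,ss,t) \<rightarrow> \<zeta>(-s, ss) as t \<rightarrow> 1-
   by Abel's theorem. Termwise differentiation gives d/dt F(s+1,ss,t) = F(s,ss,t) / t and
   d/dt F(1,q#ss,t) = - F(q,ss,t) / (1 + t), and F(1,{1}_m,t) = (- ln (1 + t))^(m+1) / (m+1)!.
   Replace ln 2 by ln (1 + t) and every \<zeta>(-s, ss) by F(s,ss,t) in the identity. Both sides
   vanish at t = 0 and have the same derivative on (0,1): the derivatives of the ln-weighted
   sums and of the convolution telescope, and the boundary terms that survive cancel against
   the derivatives of the products ln (1 + t)^(m+1) * F. Letting t \<rightarrow> 1- proves the identity. *)

section \<open>Truncated sums with positive entries\<close>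

lemma mzv_trunc_0: "mzv_trunc ss 0 = (if ss = [] then 1 else 0)"
  by (cases ss) auto

lemma mzv_trunc_Cons_Suc:
  "mzv_trunc (s # ss) (Suc n) =
     mzv_trunc (s # ss) n + of_int (sgn s) ^ Suc n / real (Suc n) ^ nat \<bar>s\<bar> * mzv_trunc ss n"
  by (simp add: sum.cl_ivl_Suc)

lemma mzv_trunc_nonneg: "\<forall>s\<in>set ss. 0 < s \<Longrightarrow> 0 \<le> mzv_trunc ss n"
  by (induction ss arbitrary: n) (auto intro!: sum_nonneg)

lemma mzv_trunc_le_Suc: "\<forall>s\<in>set ss. 0 < s \<Longrightarrow> mzv_trunc ss n \<le> mzv_trunc ss (Suc n)"
  by (cases ss) (auto simp: mzv_trunc_Cons_Suc mzv_trunc_nonneg simp del: mzv_trunc.simps(2))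

lemma mzv_trunc_le_harm_power:
  assumes "\<forall>s\<in>set ss. 0 < s"
  shows "mzv_trunc ss n \<le> harm n ^ length ss"
  using assms
proof (induction ss arbitrary: n)
  case Nil
  then show ?case by simp
next
  case (Cons s ss)
  then have s: "s > 0" and pos: "\<forall>s\<in>set ss. 0 < s" by auto
  have "mzv_trunc (s # ss) n = (\<Sum>i = 1..n. 1 / real i ^ nat s * mzv_trunc ss (i - 1))"
    using s by simp
  also have "\<dots> \<le> (\<Sum>i = 1..n. inverse (real i) * harm n ^ length ss)"
  proof (rule sum_mono)
    fix i assume i: "i \<in> {1..n}"
    have "real i \<le> real i ^ nat s"
      using i s by (intro self_le_power) auto
    then have weight: "1 / real i ^ nat s \<le> inverse (real i)"
      using i by (simp add: divide_simps)
    have "mzv_trunc ss (i - 1) \<le> harm (i - 1) ^ length ss"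
      by (rule Cons.IH[OF pos])
    also have "\<dots> \<le> harm n ^ length ss"
      using i by (intro power_mono harm_mono harm_nonneg) auto
    finally show "1 / real i ^ nat s * mzv_trunc ss (i - 1) \<le> inverse (real i) * harm n ^ length ss"
      using weight mzv_trunc_nonneg[OF pos] i by (intro mult_mono) auto
  qed
  also have "\<dots> = harm n ^ length (s # ss)"
    by (simp add: harm_def sum_distrib_right)
  finally show ?case .
qed

lemma mzv_trunc_Suc_minus_le:
  assumes "\<forall>s\<in>set ss. 0 < s"
  shows "mzv_trunc ss (Suc n) - mzv_trunc ss n \<le> harm (Suc n) ^ length ss / real (Suc n)"
proof (cases ss)
  case Nil
  then show ?thesis by simp
next
  case (Cons s rest)
  with assms have s: "s > 0" and pos: "\<forall>s\<in>set rest. 0 < s" by auto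
  have "real (Suc n) \<le> real (Suc n) ^ nat s"
    using s by (intro self_le_power) auto
  then have weight: "1 / real (Suc n) ^ nat s \<le> inverse (real (Suc n))"
    by (simp add: divide_simps)
  have "mzv_trunc rest n \<le> harm n ^ length rest"
    by (rule mzv_trunc_le_harm_power[OF pos])
  also have "\<dots> \<le> harm (Suc n) ^ length rest"
    by (intro power_mono harm_mono harm_nonneg) auto
  also have "\<dots> \<le> harm (Suc n) ^ length ss"
    using Cons harm_mono[of 1 "Suc n"] by (intro power_increasing) (auto simp: harm_def)
  finally have "1 / real (Suc n) ^ nat s * mzv_trunc rest n \<le> inverse (real (Suc n)) * harm (Suc n) ^ length ss"
    using weight mzv_trunc_nonneg[OF pos] by (intro mult_mono) auto
  then show ?thesis
    using Cons s by (simp add: mzv_trunc_Cons_Suc divide_inverse mult.commute del: mzv_trunc.simps)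
qed

lemma harm_power_le_powr_half: "\<exists>C>0. \<forall>n\<ge>1. harm n ^ r \<le> C * real n powr (1/2)"
proof (cases "r = 0")
  case True
  then show ?thesis by (intro exI[of _ 1]) (auto intro: ge_one_powr_ge_zero)
next
  case False
  define e where "e = 1 / (2 * real r)"
  have e: "e > 0" "e * real r = 1 / 2" using False by (simp_all add: e_def)
  show ?thesis
  proof (intro exI[of _ "(1 + 2 * real r) ^ r"] conjI allI impI)
    fix n :: nat assume n: "n \<ge> 1"
    have "e * ln (real n) = ln (real n powr e)" using n by (simp add: ln_powr)
    also have "\<dots> \<le> real n powr e - 1" using n by (intro ln_le_minus_one) auto
    finally have "ln (real n) \<le> 2 * real r * real n powr e"
      using e by (simp add: e_def field_simps)
    moreover have "harm n \<le> ln (real n) + 1"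
      using euler_mascheroni_sequence_decreasing[of 1 n] n by (simp add: harm_def)
    moreover have "1 \<le> real n powr e" using n e by (intro ge_one_powr_ge_zero) auto
    ultimately have "harm n \<le> (1 + 2 * real r) * real n powr e"
      by (simp add: algebra_simps)
    then have "harm n ^ r \<le> ((1 + 2 * real r) * real n powr e) ^ r"
      by (intro power_mono harm_nonneg)
    also have "\<dots> = (1 + 2 * real r) ^ r * real n powr (e * real r)"
      using n by (simp add: power_mult_distrib powr_realpow[symmetric] powr_powr)
    finally show "harm n ^ r \<le> (1 + 2 * real r) ^ r * real n powr (1/2)"
      unfolding e(2) .
  qed simp
qed

section \<open>Alternating series and Abel's limit theorem\<close>

lemma summable_alternating_bounded_variation:
  fixes u :: "nat \<Rightarrow> real"
  assumes "u \<longlonglongrightarrow> 0" and "summable (\<lambda>n. \<bar>u (Suc n) - u n\<bar>)"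
  shows "summable (\<lambda>n. (-1) ^ n * u n)"
proof -
  define a where "a n = (-1) ^ n * u n" for n
  have "(\<lambda>n. \<bar>a n\<bar>) \<longlonglongrightarrow> 0"
    using tendsto_rabs[OF assms(1)] by (simp add: a_def abs_mult)
  then have "summable (\<lambda>n. a (Suc n) - a n)"
    by (intro telescope_summable) (simp add: tendsto_rabs_zero_iff)
  moreover have "summable (\<lambda>n. (-1) ^ n * (u (Suc n) - u n))"
    by (rule summable_rabs_cancel) (use assms(2) in \<open>simp add: abs_mult\<close>)
  ultimately have "summable (\<lambda>n. - ((a (Suc n) - a n) + (-1) ^ n * (u (Suc n) - u n)) / 2)"
    by (intro summable_divide summable_minus summable_add)
  moreover have "(\<lambda>n. - ((a (Suc n) - a n) + (-1) ^ n * (u (Suc n) - u n)) / 2) = (\<lambda>n. (-1) ^ n * u n)"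
    by (simp add: a_def field_simps)
  ultimately show ?thesis by metis
qed

lemma power_diff_le_mult_diff:
  fixes x y :: real
  assumes "0 \<le> y" "y \<le> x" "x \<le> 1"
  shows "x ^ s - y ^ s \<le> real s * (x - y)"
proof (induction s)
  case 0
  then show ?case by simp
next
  case (Suc s)
  have "x ^ Suc s - y ^ Suc s = x * (x ^ s - y ^ s) + y ^ s * (x - y)"
    by (simp add: algebra_simps)
  also have "\<dots> \<le> 1 * (real s * (x - y)) + 1 * (x - y)"
    using Suc.IH assms by (intro add_mono mult_mono power_le_one) (auto simp: power_mono)
  finally show ?case by (simp add: algebra_simps)
qed

lemma abs_diff_weighted_powers_le:
  fixes a b x y :: real
  assumes "0 \<le> a" "a \<le> b" "0 \<le> y" "y \<le> x" "x \<le> 1" "1 \<le> s"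
  shows "\<bar>b * y ^ s - a * x ^ s\<bar> \<le> (b - a) * y + a * (real s * (x - y))"
proof -
  have "b * y ^ s - a * x ^ s = (b - a) * y ^ s - a * (x ^ s - y ^ s)"
    by (simp add: algebra_simps)
  moreover have "0 \<le> (b - a) * y ^ s" "(b - a) * y ^ s \<le> (b - a) * y"
    using assms by (auto intro!: mult_left_mono power_decreasing[of 1 s y, simplified])
  moreover have "0 \<le> a * (x ^ s - y ^ s)" "a * (x ^ s - y ^ s) \<le> a * (real s * (x - y))"
    using assms by (auto intro!: mult_left_mono power_diff_le_mult_diff power_mono)
  ultimately show ?thesis
    by linarith
qed

lemma powr_half_divide:
  fixes x :: real
  assumes "0 < x"
  shows "x powr (1/2) / x = x powr (-1/2)" and "x powr (1/2) / (x * x) = x powr (-3/2)"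
proof -
  have "x powr (1/2) = x powr (-1/2) * x powr 1" and "x powr (1/2) = x powr (-3/2) * x powr 2"
    by (simp_all only: powr_add[symmetric]) simp_all
  moreover have "x powr 1 = x" and "x powr 2 = x * x"
    using assms by (simp_all add: power2_eq_square flip: powr_realpow)
  ultimately show "x powr (1/2) / x = x powr (-1/2)" and "x powr (1/2) / (x * x) = x powr (-3/2)"
    using assms by simp_all
qed

lemma summable_alternating_slow_growth:
  fixes Y :: "nat \<Rightarrow> real"
  assumes nonneg: "\<And>n. 0 \<le> Y n" and mono: "\<And>n. Y n \<le> Y (Suc n)"
    and growth: "\<And>n. 1 \<le> n \<Longrightarrow> Y (n - 1) \<le> C * real n powr (1/2)"
    and increment: "\<And>n. 1 \<le> n \<Longrightarrow> Y n - Y (n - 1) \<le> C * real n powr (1/2) / real n"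
    and "1 \<le> s"
  shows "summable (\<lambda>n. (-1) ^ n * (if n = 0 then 0 else Y (n - 1) / real n ^ s))"
proof (rule summable_alternating_bounded_variation)
  define u where "u n = (if n = 0 then 0 else Y (n - 1) / real n ^ s)" for n
  have C: "0 \<le> C"
    using growth[of 1] nonneg[of 0] by simp
  show "u \<longlonglongrightarrow> 0"
  proof (rule tendsto_sandwich[where f = "\<lambda>_. 0" and h = "\<lambda>n. C * real n powr (-1/2)"])
    show "\<forall>\<^sub>F n in sequentially. 0 \<le> u n"
      using nonneg by (simp add: u_def)
    show "\<forall>\<^sub>F n in sequentially. u n \<le> C * real n powr (-1/2)"
    proof (rule eventually_sequentiallyI[of 1])
      fix n :: nat assume n: "1 \<le> n"
      then have "real n \<le> real n ^ s"
        using \<open>1 \<le> s\<close> by (intro self_le_power) auto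
      then have "u n \<le> Y (n - 1) / real n"
        using n nonneg by (simp add: u_def divide_left_mono)
      also have "\<dots> \<le> C * (real n powr (1/2) / real n)"
        using n growth[OF n] by (simp add: divide_right_mono)
      also have "\<dots> = C * real n powr (-1/2)"
        using n by (simp add: powr_half_divide)
      finally show "u n \<le> C * real n powr (-1/2)" .
    qed
    show "(\<lambda>n. C * real n powr (-1/2)) \<longlonglongrightarrow> 0"
      by (intro tendsto_mult_right_zero tendsto_neg_powr filterlim_real_sequentially) auto
  qed simp
  show "summable (\<lambda>n. \<bar>u (Suc n) - u n\<bar>)"
  proof (rule summable_comparison_test'[of "\<lambda>n. (1 + real s) * C * real n powr (-3/2)" 1])
    show "summable (\<lambda>n. (1 + real s) * C * real n powr (-3/2))"
      by (intro summable_mult) (simp add: summable_real_powr_iff)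
    fix n :: nat assume n: "1 \<le> n"
    define x where "x = 1 / real n"
    define y where "y = 1 / real (Suc n)"
    have xy: "0 \<le> y" "y \<le> x" "x \<le> 1"
      using n by (auto simp: x_def y_def divide_simps)
    have "\<bar>u (Suc n) - u n\<bar> = \<bar>Y n * y ^ s - Y (n - 1) * x ^ s\<bar>"
      using n by (simp add: u_def x_def y_def power_one_over)
    also have "\<dots> \<le> (Y n - Y (n - 1)) * y + Y (n - 1) * (real s * (x - y))"
      using nonneg mono[of "n - 1"] xy n \<open>1 \<le> s\<close> by (intro abs_diff_weighted_powers_le) auto
    also have "\<dots> \<le> C * real n powr (1/2) / real n * y + C * real n powr (1/2) * (real s * (x - y))"
      using increment[OF n] growth[OF n] xy by (intro add_mono mult_right_mono) auto
    also have "\<dots> = (1 + real s) * C * (real n powr (1/2) / (real n * real (Suc n)))"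
      using n by (simp add: x_def y_def field_simps) (simp add: add_divide_distrib)
    also have "\<dots> \<le> (1 + real s) * C * (real n powr (1/2) / (real n * real n))"
      using n C by (intro mult_left_mono divide_left_mono) auto
    finally show "norm \<bar>u (Suc n) - u n\<bar> \<le> (1 + real s) * C * real n powr (-3/2)"
      using n by (simp add: powr_half_divide)
  qed
qed

lemma sums_powser_shift:
  fixes e :: "nat \<Rightarrow> 'a::real_normed_field"
  assumes "(\<lambda>n. e n * t ^ n) sums S"
  shows "(\<lambda>n. (if n = 0 then 0 else e (n - 1)) * t ^ n) sums (t * S)"
proof -
  have "(\<lambda>n. t * (e n * t ^ n)) sums (t * S)"
    using sums_mult[OF assms] .
  then have "(\<lambda>n. (\<lambda>n. (if n = 0 then 0 else e (n - 1)) * t ^ n) (Suc n)) sums (t * S)"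
    by (simp add: algebra_simps)
  then show ?thesis
    by (subst (asm) sums_Suc_iff) simp
qed

lemma sums_powser_times_one_plus:
  fixes e :: "nat \<Rightarrow> 'a::real_normed_field"
  assumes "(\<lambda>n. e n * t ^ n) sums S"
  shows "(\<lambda>n. (e n + (if n = 0 then 0 else e (n - 1))) * t ^ n) sums ((1 + t) * S)"
  using sums_add[OF assms sums_powser_shift[OF assms]] by (simp add: algebra_simps)

lemma abs_suminf_powser_le:
  fixes D :: "nat \<Rightarrow> real"
  assumes t: "0 \<le> t" "t < 1" and tail: "\<And>n. N \<le> n \<Longrightarrow> \<bar>D n\<bar> \<le> c"
  shows "\<bar>\<Sum>n. D n * t ^ n\<bar> \<le> (\<Sum>n<N. \<bar>D n\<bar>) + c / (1 - t)"
proof -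
  define g where "g n = (if n < N then \<bar>D n\<bar> else 0) + c * t ^ n" for n
  have "c \<ge> 0"
    using tail[of N] by simp
  have "(\<lambda>n. if n < N then \<bar>D n\<bar> else 0) sums (\<Sum>n<N. \<bar>D n\<bar>)"
    using sums_If_finite_set[of "{..<N}" "\<lambda>n. \<bar>D n\<bar>"] by simp
  moreover have "(\<lambda>n. c * t ^ n) sums (c / (1 - t))"
    using sums_mult[OF geometric_sums, of t c] t by simp
  ultimately have g_sums: "g sums ((\<Sum>n<N. \<bar>D n\<bar>) + c / (1 - t))"
    unfolding g_def by (rule sums_add)
  have le_g: "\<bar>D n\<bar> * t ^ n \<le> g n" for n
  proof (cases "n < N")
    case True
    have "\<bar>D n\<bar> * t ^ n \<le> \<bar>D n\<bar>" and "0 \<le> c * t ^ n"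
      using t \<open>c \<ge> 0\<close> by (simp_all add: mult_left_le power_le_one)
    with True show ?thesis
      by (simp add: g_def)
  next
    case False
    then show ?thesis
      using t tail[of n] by (simp add: g_def mult_right_mono)
  qed
  have abs_summable: "summable (\<lambda>n. \<bar>D n\<bar> * t ^ n)"
    using le_g t by (intro summable_comparison_test[OF _ sums_summable[OF g_sums]]) auto
  have "\<bar>\<Sum>n. D n * t ^ n\<bar> \<le> (\<Sum>n. \<bar>D n\<bar> * t ^ n)"
    using summable_rabs[of "\<lambda>n. D n * t ^ n"] abs_summable t by (simp add: abs_mult)
  also have "\<dots> \<le> suminf g"
    using le_g abs_summable sums_summable[OF g_sums] by (rule suminf_le)
  also have "\<dots> = (\<Sum>n<N. \<bar>D n\<bar>) + c / (1 - t)"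
    using g_sums by (rule sums_unique[symmetric])
  finally show ?thesis .
qed

lemma powser_minus_sum_eq:
  fixes a :: "nat \<Rightarrow> real"
  assumes "a sums S" and "\<bar>t\<bar> < 1"
  shows "(\<Sum>n. a n * t ^ n) - S = (1 - t) * (\<Sum>n. ((\<Sum>i\<le>n. a i) - S) * t ^ n)"
proof -
  define D where "D n = (\<Sum>i\<le>n. a i) - S" for n
  have "D \<longlonglongrightarrow> 0"
    using assms(1) by (simp add: D_def[abs_def] LIM_zero_iff sums_def' atLeast0AtMost)
  then obtain K where K: "\<And>n. \<bar>D n\<bar> \<le> K"
    using convergent_imp_Bseq[OF convergentI[OF \<open>D \<longlonglongrightarrow> 0\<close>]] by (auto simp: Bseq_def)
  have "summable (\<lambda>n. K * \<bar>t\<bar> ^ n)"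
    using assms(2) by (simp add: summable_mult summable_geometric)
  then have "summable (\<lambda>n. D n * t ^ n)"
    by (rule summable_comparison_test') (use K in \<open>auto simp: abs_mult power_abs intro: mult_right_mono\<close>)
  then have D_sums: "(\<lambda>n. D n * t ^ n) sums (\<Sum>n. D n * t ^ n)"
    by (rule summable_sums)
  \<comment> \<open>Abel summation: \<open>a n = D n - D (n - 1)\<close> for \<open>n > 0\<close>, and \<open>a 0 = D 0 + S\<close>.\<close>
  have "(\<lambda>n. D n * t ^ n - (if n = 0 then 0 else D (n - 1)) * t ^ n + (if n = 0 then S else 0))
      sums ((\<Sum>n. D n * t ^ n) - t * (\<Sum>n. D n * t ^ n) + S)"
    using sums_add[OF sums_diff[OF D_sums sums_powser_shift[OF D_sums]] sums_single[of 0 "\<lambda>_. S"]]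
    by simp
  moreover have "D n * t ^ n - (if n = 0 then 0 else D (n - 1)) * t ^ n + (if n = 0 then S else 0)
      = a n * t ^ n" for n
    by (cases n) (auto simp: D_def algebra_simps)
  ultimately show ?thesis
    by (simp add: sums_iff D_def algebra_simps)
qed

theorem Abel_limit:
  fixes a :: "nat \<Rightarrow> real"
  assumes "a sums S"
  shows "((\<lambda>t. \<Sum>n. a n * t ^ n) \<longlongrightarrow> S) (at_left 1)"
proof (rule tendstoI)
  fix e :: real assume e: "e > 0"
  define D where "D n = (\<Sum>i\<le>n. a i) - S" for n
  have "D \<longlonglongrightarrow> 0"
    using assms by (simp add: D_def[abs_def] LIM_zero_iff sums_def' atLeast0AtMost)
  then obtain N where N: "\<And>n. N \<le> n \<Longrightarrow> \<bar>D n\<bar> \<le> e / 2"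
    using LIMSEQ_D[of D 0 "e/2"] e by (auto intro: less_imp_le)
  define B where "B = (\<Sum>n<N. \<bar>D n\<bar>)"
  have "B \<ge> 0"
    by (simp add: B_def sum_nonneg)
  have bound: "\<bar>(\<Sum>n. a n * t ^ n) - S\<bar> \<le> (1 - t) * B + e / 2" if t: "0 \<le> t" "t < 1" for t
  proof -
    have "\<bar>(\<Sum>n. a n * t ^ n) - S\<bar> = (1 - t) * \<bar>\<Sum>n. D n * t ^ n\<bar>"
      using powser_minus_sum_eq[OF assms, of t] t by (simp add: D_def abs_mult)
    also have "\<dots> \<le> (1 - t) * (B + e / 2 / (1 - t))"
      using abs_suminf_powser_le[OF t N] t by (intro mult_left_mono) (auto simp: B_def)
    also have "\<dots> = (1 - t) * B + e / 2"
      using t by (simp add: field_simps)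
    finally show ?thesis .
  qed
  define d where "d = e / (2 * (B + 1))"
  have "d > 0"
    using e \<open>B \<ge> 0\<close> by (simp add: d_def)
  then have "eventually (\<lambda>t. t \<in> {max 0 (1 - d)<..<1}) (at_left (1::real))"
    by (intro eventually_at_left_real) auto
  then show "eventually (\<lambda>t. dist (\<Sum>n. a n * t ^ n) S < e) (at_left 1)"
  proof eventually_elim
    case (elim t)
    then have "\<bar>(\<Sum>n. a n * t ^ n) - S\<bar> \<le> (1 - t) * B + e / 2"
      by (intro bound) auto
    also have "(1 - t) * B \<le> d * B"
      using elim \<open>B \<ge> 0\<close> by (intro mult_right_mono) auto
    also have "d * B < e / 2"
      using e \<open>B \<ge> 0\<close> by (simp add: d_def field_simps)
    finally show ?case
      by (simp add: dist_real_def)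
  qed
qed

section \<open>Differentiation\<close>

lemma eq_if_same_derivative_on_interval:
  fixes f g :: "real \<Rightarrow> real"
  assumes "a \<le> b" and "continuous_on {a..b} f" "continuous_on {a..b} g"
    and "\<And>x. a < x \<Longrightarrow> x < b \<Longrightarrow> (f has_field_derivative D x) (at x)"
    and "\<And>x. a < x \<Longrightarrow> x < b \<Longrightarrow> (g has_field_derivative D x) (at x)"
    and "f a = g a"
  shows "f b = g b"
proof (cases "a = b")
  case False
  have "(\<lambda>x. f x - g x) b = (\<lambda>x. f x - g x) a"
  proof (rule DERIV_isconst_end[where f = "\<lambda>x. f x - g x"])
    show "continuous_on {a..b} (\<lambda>x. f x - g x)"
      using assms(2,3) by (rule continuous_on_diff)
    show "((\<lambda>x. f x - g x) has_field_derivative 0) (at x)" if "a < x" "x < b" for x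
      using DERIV_diff[OF assms(4,5)[OF that]] by simp
  qed (use assms(1) False in auto)
  with assms(6) show ?thesis by simp
qed (use assms(6) in simp)

lemma DERIV_power_Suc_divide_fact:
  fixes f :: "real \<Rightarrow> real"
  assumes "(f has_field_derivative f') (at x)"
  shows "((\<lambda>x. f x ^ Suc n / fact (Suc n)) has_field_derivative f x ^ n / fact n * f') (at x)"
proof -
  have "((\<lambda>x. f x ^ Suc n / fact (Suc n)) has_field_derivative
      (1 + real n) * (f' * f x ^ n) / fact (Suc n)) (at x)"
    by (intro DERIV_cdivide DERIV_power_Suc assms)
  moreover have "(1 + real n) * (f' * f x ^ n) / fact (Suc n) = f x ^ n / fact n * f'"
  proof -
    have "(1 + real n) * (f' * f x ^ n) / fact (Suc n) = (1 + real n) * (f' * f x ^ n) / ((1 + real n) * fact n)"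
      by (simp add: fact_Suc)
    also have "\<dots> = f x ^ n / fact n * f'"
      by (subst mult_divide_mult_cancel_left) (simp_all add: add_pos_nonneg)
    finally show ?thesis .
  qed
  ultimately show ?thesis by (simp only:)
qed

lemma DERIV_weighted_sum_telescope:
  fixes l :: "real \<Rightarrow> real" and a :: "nat \<Rightarrow> real \<Rightarrow> real"
  assumes dl: "(l has_field_derivative l') (at t)"
    and da: "\<And>j. (a (Suc j) has_field_derivative - a j t * l') (at t)"
    and d0: "(a 0 has_field_derivative - b * l') (at t)"
  shows "((\<lambda>x. \<Sum>i = 0..m. l x ^ i / fact i * a (m - i) x) has_field_derivative
      - (l t ^ m / fact m * b * l')) (at t)"
  using da d0
proof (induction m arbitrary: a b)
  case 0
  then show ?case by simp
next
  case (Suc m)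
  have IH: "((\<lambda>x. \<Sum>i = 0..m. l x ^ i / fact i * a (Suc (m - i)) x) has_field_derivative
      - (l t ^ m / fact m * a 0 t * l')) (at t)"
    using Suc.IH[of "\<lambda>j. a (Suc j)" "a 0 t"] Suc.prems by simp
  have "((\<lambda>x. (\<Sum>i = 0..m. l x ^ i / fact i * a (Suc (m - i)) x) + l x ^ Suc m / fact (Suc m) * a 0 x)
      has_field_derivative - (l t ^ m / fact m * a 0 t * l')
        + (l t ^ m / fact m * l' * a 0 t + - b * l' * (l t ^ Suc m / fact (Suc m)))) (at t)"
    by (rule DERIV_add[OF IH DERIV_mult[OF DERIV_power_Suc_divide_fact[OF dl] Suc.prems(2)]])
  moreover have "(\<lambda>x. \<Sum>i = 0..Suc m. l x ^ i / fact i * a (Suc m - i) x)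
      = (\<lambda>x. (\<Sum>i = 0..m. l x ^ i / fact i * a (Suc (m - i)) x) + l x ^ Suc m / fact (Suc m) * a 0 x)"
    by (simp add: Suc_diff_le)
  moreover have "- (l t ^ m / fact m * a 0 t * l')
        + (l t ^ m / fact m * l' * a 0 t + - b * l' * (l t ^ Suc m / fact (Suc m)))
      = - (l t ^ Suc m / fact (Suc m) * b * l')"
    by (simp add: algebra_simps)
  ultimately show ?case by (simp only:)
qed

lemma DERIV_alternating_convolution_telescope:
  fixes u v :: "nat \<Rightarrow> real \<Rightarrow> real"
  assumes du: "\<And>s. 1 \<le> s \<Longrightarrow> (u (Suc s) has_field_derivative u s t * c) (at t)"
    and dv: "\<And>s. 1 \<le> s \<Longrightarrow> (v (Suc s) has_field_derivative v s t * c) (at t)"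
  shows "((\<lambda>x. \<Sum>i = 0..p. (-1) ^ i * u (i + 2) x * v (p + 2 - i) x) has_field_derivative
      (u 1 t * v (p + 2) t + (-1) ^ p * u (p + 2) t * v 1 t) * c) (at t)"
proof -
  define w where "w i = (-1) ^ i * u (i + 1) t * v (p + 2 - i) t" for i
  have "((\<lambda>x. \<Sum>i = 0..p. (-1) ^ i * u (i + 2) x * v (p + 2 - i) x) has_field_derivative
      (\<Sum>i = 0..p. (w i - w (Suc i)) * c)) (at t)"
  proof (rule DERIV_sum)
    fix i assume "i \<in> {0..p}"
    then have "p + 2 - i = Suc (p + 1 - i)" and "p + 2 - Suc i = p + 1 - i" and "1 \<le> p + 1 - i"
      by auto
    then show "((\<lambda>x. (-1) ^ i * u (i + 2) x * v (p + 2 - i) x) has_field_derivative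
        (w i - w (Suc i)) * c) (at t)"
      using DERIV_cmult[OF DERIV_mult[OF du dv], of "i + 1" "p + 1 - i" "(-1) ^ i"]
      by (simp add: w_def algebra_simps)
  qed
  also have "(\<Sum>i = 0..p. (w i - w (Suc i)) * c) = (w 0 - w (Suc p)) * c"
    by (simp only: atLeast0AtMost sum_distrib_right[symmetric] sum_telescope)
  also have "\<dots> = (u 1 t * v (p + 2) t + (-1) ^ p * u (p + 2) t * v 1 t) * c"
    by (simp add: w_def)
  finally show ?thesis .
qed

section \<open>The generating functions\<close>

definition alt_mzv_coeff :: "nat \<Rightarrow> int list \<Rightarrow> nat \<Rightarrow> real" where
  "alt_mzv_coeff s ss n = (if n = 0 then 0 else (-1) ^ n / real n ^ s * mzv_trunc ss (n - 1))"

lemma summable_alt_mzv_coeff: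
  assumes pos: "\<forall>x\<in>set ss. 0 < x" and "1 \<le> s"
  shows "summable (alt_mzv_coeff s ss)"
proof -
  obtain C where C: "\<And>n. 1 \<le> n \<Longrightarrow> harm n ^ length ss \<le> C * real n powr (1/2)"
    using harm_power_le_powr_half by blast
  have growth: "mzv_trunc ss (n - 1) \<le> C * real n powr (1/2)" if n: "1 \<le> n" for n
  proof -
    have "mzv_trunc ss (n - 1) \<le> harm (n - 1) ^ length ss"
      by (rule mzv_trunc_le_harm_power[OF pos])
    also have "\<dots> \<le> harm n ^ length ss"
      by (intro power_mono harm_mono harm_nonneg) auto
    finally show ?thesis using C[OF n] by linarith
  qed
  have increment: "mzv_trunc ss n - mzv_trunc ss (n - 1) \<le> C * real n powr (1/2) / real n"
    if n: "1 \<le> n" for n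
    using mzv_trunc_Suc_minus_le[OF pos, of "n - 1"] C[OF n] n
    by (simp add: divide_right_mono order_trans)
  have "summable (\<lambda>n. (-1) ^ n * (if n = 0 then 0 else mzv_trunc ss (n - 1) / real n ^ s))"
    using mzv_trunc_nonneg[OF pos] mzv_trunc_le_Suc[OF pos] growth increment \<open>1 \<le> s\<close>
    by (rule summable_alternating_slow_growth)
  also have "(\<lambda>n. (-1) ^ n * (if n = 0 then 0 else mzv_trunc ss (n - 1) / real n ^ s)) = alt_mzv_coeff s ss"
    by (simp add: alt_mzv_coeff_def fun_eq_iff)
  finally show ?thesis .
qed

lemma mzv_trunc_neg_Cons:
  assumes "1 \<le> s"
  shows "mzv_trunc (- int s # ss) N = (\<Sum>n<Suc N. alt_mzv_coeff s ss n)"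
proof -
  have "(\<Sum>n<Suc N. alt_mzv_coeff s ss n) = (\<Sum>n\<in>insert 0 {1..N}. alt_mzv_coeff s ss n)"
    by (rule sum.cong) auto
  also have "\<dots> = mzv_trunc (- int s # ss) N"
    using assms by (auto simp: alt_mzv_coeff_def intro!: sum.cong)
  finally show ?thesis ..
qed

lemma alt_mzv_coeff_sums_mzv:
  assumes "\<forall>x\<in>set ss. 0 < x" and "1 \<le> s"
  shows "alt_mzv_coeff s ss sums mzv (- int s # ss)"
proof -
  have sm: "summable (alt_mzv_coeff s ss)"
    using assms by (rule summable_alt_mzv_coeff)
  then have "(\<lambda>N. mzv_trunc (- int s # ss) N) \<longlonglongrightarrow> suminf (alt_mzv_coeff s ss)"
    unfolding mzv_trunc_neg_Cons[OF assms(2)] using summable_LIMSEQ'[OF sm]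
    by (simp add: lessThan_Suc_atMost)
  then have "mzv (- int s # ss) = suminf (alt_mzv_coeff s ss)"
    unfolding mzv_def by (rule limI)
  with sm show ?thesis
    by (simp add: summable_sums)
qed

(* F(s,ss,t) of the header, i.e. the multiple polylogarithm Li_(s,ss)(-t). *)
definition alt_mzv_gen :: "nat \<Rightarrow> int list \<Rightarrow> real \<Rightarrow> real" where
  "alt_mzv_gen s ss t = (\<Sum>n. alt_mzv_coeff s ss n * t ^ n)"

lemma alt_mzv_gen_0 [simp]: "alt_mzv_gen s ss 0 = 0"
  by (simp add: alt_mzv_gen_def alt_mzv_coeff_def)

lemma alt_mzv_gen_sums:
  assumes "\<forall>x\<in>set ss. 0 < x" "1 \<le> s" "\<bar>t\<bar> < 1"
  shows "(\<lambda>n. alt_mzv_coeff s ss n * t ^ n) sums alt_mzv_gen s ss t"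
  unfolding alt_mzv_gen_def
  using powser_inside[of "alt_mzv_coeff s ss" 1 t] summable_alt_mzv_coeff[OF assms(1,2)] assms(3)
  by (simp add: summable_sums)

lemma has_field_derivative_alt_mzv_gen:
  assumes "\<forall>x\<in>set ss. 0 < x" "1 \<le> s" "\<bar>t\<bar> < 1"
  shows "(alt_mzv_gen s ss has_field_derivative (\<Sum>n. diffs (alt_mzv_coeff s ss) n * t ^ n)) (at t)"
    and "(\<lambda>n. diffs (alt_mzv_coeff s ss) n * t ^ n) sums (\<Sum>n. diffs (alt_mzv_coeff s ss) n * t ^ n)"
proof -
  have summable: "summable (\<lambda>n. alt_mzv_coeff s ss n * 1 ^ n)"
    using summable_alt_mzv_coeff[OF assms(1,2)] by simp
  show "(alt_mzv_gen s ss has_field_derivative (\<Sum>n. diffs (alt_mzv_coeff s ss) n * t ^ n)) (at t)"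
    unfolding alt_mzv_gen_def[abs_def] by (rule termdiffs_strong[OF summable]) (use assms(3) in simp)
  have "summable (\<lambda>n. diffs (alt_mzv_coeff s ss) n * t ^ n)"
    by (rule termdiff_converges[of t 1]) (use assms(3) powser_inside[OF summable] in auto)
  then show "(\<lambda>n. diffs (alt_mzv_coeff s ss) n * t ^ n) sums (\<Sum>n. diffs (alt_mzv_coeff s ss) n * t ^ n)"
    by (rule summable_sums)
qed

lemma isCont_alt_mzv_gen:
  "\<forall>x\<in>set ss. 0 < x \<Longrightarrow> 1 \<le> s \<Longrightarrow> \<bar>t\<bar> < 1 \<Longrightarrow> isCont (alt_mzv_gen s ss) t"
  using has_field_derivative_alt_mzv_gen(1) by (rule DERIV_isCont)

lemma alt_mzv_gen_tendsto_mzv: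
  "\<forall>x\<in>set ss. 0 < x \<Longrightarrow> 1 \<le> s \<Longrightarrow> (alt_mzv_gen s ss \<longlongrightarrow> mzv (- int s # ss)) (at_left 1)"
  unfolding alt_mzv_gen_def[abs_def] by (rule Abel_limit[OF alt_mzv_coeff_sums_mzv])

lemma diffs_alt_mzv_coeff:
  "1 \<le> s \<Longrightarrow> diffs (alt_mzv_coeff s ss) n = (-1) ^ Suc n / real (Suc n) ^ (s - 1) * mzv_trunc ss n"
  by (cases s) (simp_all add: diffs_def alt_mzv_coeff_def)

lemma has_field_derivative_alt_mzv_gen_Suc:
  assumes "\<forall>x\<in>set ss. 0 < x" "1 \<le> s" "\<bar>t\<bar> < 1" "t \<noteq> 0"
  shows "(alt_mzv_gen (Suc s) ss has_field_derivative alt_mzv_gen s ss t / t) (at t)"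
proof -
  have "1 \<le> Suc s" by simp
  note deriv = has_field_derivative_alt_mzv_gen[OF assms(1) this assms(3)]
  have "(if n = 0 then 0 else diffs (alt_mzv_coeff (Suc s) ss) (n - 1)) = alt_mzv_coeff s ss n" for n
    by (simp add: diffs_alt_mzv_coeff alt_mzv_coeff_def)
  then have "(\<lambda>n. alt_mzv_coeff s ss n * t ^ n) sums (t * (\<Sum>n. diffs (alt_mzv_coeff (Suc s) ss) n * t ^ n))"
    using sums_powser_shift[OF deriv(2)] by simp
  then have "t * (\<Sum>n. diffs (alt_mzv_coeff (Suc s) ss) n * t ^ n) = alt_mzv_gen s ss t"
    using alt_mzv_gen_sums[OF assms(1-3)] by (rule sums_unique2)
  then have "(\<Sum>n. diffs (alt_mzv_coeff (Suc s) ss) n * t ^ n) = alt_mzv_gen s ss t / t"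
    using assms(4) by (simp add: eq_divide_eq mult.commute)
  then show ?thesis
    using deriv(1) by simp
qed

lemma has_field_derivative_alt_mzv_gen_1_Nil:
  assumes "\<bar>t\<bar> < 1"
  shows "(alt_mzv_gen 1 [] has_field_derivative - 1 / (1 + t)) (at t)"
proof -
  note deriv = has_field_derivative_alt_mzv_gen[of "[]" 1, OF _ order_refl assms, simplified empty_iff ball_empty]
  have "(diffs (alt_mzv_coeff 1 []) n + (if n = 0 then 0 else diffs (alt_mzv_coeff 1 []) (n - 1))) * t ^ n
      = (if n = 0 then -1 else 0)" for n
    by (cases n) (simp_all add: diffs_alt_mzv_coeff)
  then have "(\<lambda>n. if n = 0 then -1 else 0) sums ((1 + t) * (\<Sum>n. diffs (alt_mzv_coeff 1 []) n * t ^ n))"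
    using sums_powser_times_one_plus[OF deriv(2)] by simp
  then have "(1 + t) * (\<Sum>n. diffs (alt_mzv_coeff 1 []) n * t ^ n) = - 1"
    using sums_single[of 0 "\<lambda>_. - 1 :: real"] by (simp add: sums_unique2)
  moreover have "1 + t \<noteq> 0"
    using assms by linarith
  ultimately have "(\<Sum>n. diffs (alt_mzv_coeff 1 []) n * t ^ n) = - 1 / (1 + t)"
    by (simp add: field_simps)
  then show ?thesis
    using deriv(1) by simp
qed

lemma has_field_derivative_alt_mzv_gen_1_Cons:
  assumes "\<forall>x\<in>set ss. 0 < x" "1 \<le> q" "\<bar>t\<bar> < 1"
  shows "(alt_mzv_gen 1 (int q # ss) has_field_derivative - alt_mzv_gen q ss t / (1 + t)) (at t)"
proof -
  have pos: "\<forall>x\<in>set (int q # ss). 0 < x"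
    using assms(1,2) by auto
  note deriv = has_field_derivative_alt_mzv_gen[OF pos order_refl assms(3)]
  have "diffs (alt_mzv_coeff 1 (int q # ss)) n + (if n = 0 then 0 else diffs (alt_mzv_coeff 1 (int q # ss)) (n - 1))
      = - alt_mzv_coeff q ss n" for n
    using assms(2)
    by (cases n) (simp_all add: diffs_alt_mzv_coeff alt_mzv_coeff_def mzv_trunc_0 mzv_trunc_Cons_Suc
        field_simps del: mzv_trunc.simps)
  then have "(\<lambda>n. - (alt_mzv_coeff q ss n * t ^ n))
      sums ((1 + t) * (\<Sum>n. diffs (alt_mzv_coeff 1 (int q # ss)) n * t ^ n))"
    using sums_powser_times_one_plus[OF deriv(2)] by simp
  then have "(1 + t) * (\<Sum>n. diffs (alt_mzv_coeff 1 (int q # ss)) n * t ^ n) = - alt_mzv_gen q ss t"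
    using sums_minus[OF alt_mzv_gen_sums[OF assms(1,2,3)]] by (rule sums_unique2)
  moreover have "1 + t \<noteq> 0"
    using assms(3) by linarith
  ultimately have "(\<Sum>n. diffs (alt_mzv_coeff 1 (int q # ss)) n * t ^ n) = - alt_mzv_gen q ss t / (1 + t)"
    by (simp add: field_simps)
  then show ?thesis
    using deriv(1) by simp
qed

lemma continuous_on_alt_mzv_gen:
  "\<forall>x\<in>set ss. 0 < x \<Longrightarrow> 1 \<le> s \<Longrightarrow> S \<subseteq> {-1<..<1} \<Longrightarrow> continuous_on S (alt_mzv_gen s ss)"
  by (intro continuous_at_imp_continuous_on ballI isCont_alt_mzv_gen) (auto simp: abs_less_iff)

lemma alt_mzv_gen_1_Nil:
  assumes "0 \<le> t" "t < 1"
  shows "alt_mzv_gen 1 [] t = - ln (1 + t)"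
proof (rule eq_if_same_derivative_on_interval[OF assms(1), where D = "\<lambda>x. - 1 / (1 + x)"])
  show "continuous_on {0..t} (alt_mzv_gen 1 [])"
    using assms by (intro continuous_on_alt_mzv_gen) auto
  show "continuous_on {0..t} (\<lambda>x. - ln (1 + x))"
    by (intro continuous_intros) auto
  fix x :: real assume "0 < x" "x < t"
  with assms show "(alt_mzv_gen 1 [] has_field_derivative - 1 / (1 + x)) (at x)"
    by (intro has_field_derivative_alt_mzv_gen_1_Nil) auto
  from \<open>0 < x\<close> show "((\<lambda>x. - ln (1 + x)) has_field_derivative - 1 / (1 + x)) (at x)"
    by (auto intro!: derivative_eq_intros)
qed simp

lemma alt_mzv_gen_1_ones:
  assumes "0 \<le> t" "t < 1"
  shows "alt_mzv_gen 1 (replicate m 1) t = (- ln (1 + t)) ^ Suc m / fact (Suc m)"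
  using assms
proof (induction m arbitrary: t)
  case 0
  then show ?case
    using alt_mzv_gen_1_Nil by simp
next
  case (Suc m)
  show ?case
  proof (rule eq_if_same_derivative_on_interval[OF Suc.prems(1)])
    show "continuous_on {0..t} (alt_mzv_gen 1 (replicate (Suc m) 1))"
      using Suc.prems by (intro continuous_on_alt_mzv_gen) auto
    show "continuous_on {0..t} (\<lambda>x. (- ln (1 + x)) ^ Suc (Suc m) / fact (Suc (Suc m)))"
      by (intro continuous_intros) auto
    fix x :: real assume x: "0 < x" "x < t"
    have "(alt_mzv_gen 1 (int 1 # replicate m 1) has_field_derivative
        - alt_mzv_gen 1 (replicate m 1) x / (1 + x)) (at x)"
      using Suc.prems x by (intro has_field_derivative_alt_mzv_gen_1_Cons) auto
    then show "(alt_mzv_gen 1 (replicate (Suc m) 1) has_field_derivative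
        - ((- ln (1 + x)) ^ Suc m / fact (Suc m)) / (1 + x)) (at x)"
      using Suc.IH[of x] Suc.prems x by simp
    have "((\<lambda>x. - ln (1 + x)) has_field_derivative - (1 / (1 + x))) (at x)"
      using x by (auto intro!: derivative_eq_intros)
    from DERIV_power_Suc_divide_fact[OF this, of "Suc m"]
    show "((\<lambda>x. (- ln (1 + x)) ^ Suc (Suc m) / fact (Suc (Suc m))) has_field_derivative
        - ((- ln (1 + x)) ^ Suc m / fact (Suc m)) / (1 + x)) (at x)"
      by simp
  qed simp
qed

section \<open>The identity for the generating functions\<close>

lemma has_field_derivative_ln_weighted_alt_mzv_sum:
  assumes "\<forall>x\<in>set ss. 0 < x" "1 \<le> q" "\<bar>t\<bar> < 1"
  shows "((\<lambda>x. \<Sum>i = 0..m. ln (1 + x) ^ i / fact i * alt_mzv_gen 1 (replicate (m - i) 1 @ int q # ss) x)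
      has_field_derivative - (ln (1 + t) ^ m / fact m * alt_mzv_gen q ss t / (1 + t))) (at t)"
proof -
  have "1 + t > 0"
    using assms(3) by linarith
  have pos: "\<forall>x\<in>set (replicate j 1 @ int q # ss). 0 < x" for j
    using assms(1,2) by auto
  have "((\<lambda>x. \<Sum>i = 0..m. ln (1 + x) ^ i / fact i * alt_mzv_gen 1 (replicate (m - i) 1 @ int q # ss) x)
      has_field_derivative - (ln (1 + t) ^ m / fact m * alt_mzv_gen q ss t * (1 / (1 + t)))) (at t)"
  proof (rule DERIV_weighted_sum_telescope)
    show "((\<lambda>x. ln (1 + x)) has_field_derivative 1 / (1 + t)) (at t)"
      using \<open>1 + t > 0\<close> by (auto intro!: derivative_eq_intros)
    show "(alt_mzv_gen 1 (replicate (Suc j) 1 @ int q # ss) has_field_derivative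
        - alt_mzv_gen 1 (replicate j 1 @ int q # ss) t * (1 / (1 + t))) (at t)" for j
      using has_field_derivative_alt_mzv_gen_1_Cons[OF pos order_refl assms(3)] by simp
    show "(alt_mzv_gen 1 (replicate 0 1 @ int q # ss) has_field_derivative
        - alt_mzv_gen q ss t * (1 / (1 + t))) (at t)"
      using has_field_derivative_alt_mzv_gen_1_Cons[OF assms] by simp
  qed
  then show ?thesis by simp
qed

lemma has_field_derivative_ln_power_times_alt_mzv_gen:
  assumes "\<forall>x\<in>set ss. 0 < x" "1 \<le> s" "0 < t" "t < 1"
  shows "((\<lambda>x. ln (1 + x) ^ Suc m / fact (Suc m) * alt_mzv_gen (Suc s) ss x) has_field_derivative
      ln (1 + t) ^ m / fact m * alt_mzv_gen (Suc s) ss t / (1 + t)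
      + ln (1 + t) ^ Suc m / fact (Suc m) * alt_mzv_gen s ss t / t) (at t)"
proof -
  have "((\<lambda>x. ln (1 + x)) has_field_derivative 1 / (1 + t)) (at t)"
    using assms by (auto intro!: derivative_eq_intros)
  then have "((\<lambda>x. ln (1 + x) ^ Suc m / fact (Suc m) * alt_mzv_gen (Suc s) ss x) has_field_derivative
      ln (1 + t) ^ m / fact m * (1 / (1 + t)) * alt_mzv_gen (Suc s) ss t
      + alt_mzv_gen s ss t / t * (ln (1 + t) ^ Suc m / fact (Suc m))) (at t)"
    using assms by (intro DERIV_mult DERIV_power_Suc_divide_fact has_field_derivative_alt_mzv_gen_Suc) auto
  moreover have "ln (1 + t) ^ m / fact m * (1 / (1 + t)) * alt_mzv_gen (Suc s) ss t
      + alt_mzv_gen s ss t / t * (ln (1 + t) ^ Suc m / fact (Suc m))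
    = ln (1 + t) ^ m / fact m * alt_mzv_gen (Suc s) ss t / (1 + t)
      + ln (1 + t) ^ Suc m / fact (Suc m) * alt_mzv_gen s ss t / t"
    by (simp add: ac_simps)
  ultimately show ?thesis by (simp only:)
qed

lemma has_field_derivative_alt_mzv_gen_convolution:
  assumes "\<forall>x\<in>set ss. 0 < x" "\<forall>x\<in>set rs. 0 < x" "0 < t" "t < 1"
  shows "((\<lambda>x. \<Sum>i = 0..p. (-1) ^ i * alt_mzv_gen (i + 2) ss x * alt_mzv_gen (p + 2 - i) rs x)
      has_field_derivative (alt_mzv_gen 1 ss t * alt_mzv_gen (p + 2) rs t
        + (-1) ^ p * alt_mzv_gen (p + 2) ss t * alt_mzv_gen 1 rs t) / t) (at t)"
  using DERIV_alternating_convolution_telescope[of "\<lambda>s. alt_mzv_gen s ss" t "1 / t"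
      "\<lambda>s. alt_mzv_gen s rs" p] has_field_derivative_alt_mzv_gen_Suc assms
  by simp

(* The two sides of theorem4p1, with ln 2 replaced by L and \<zeta>(-s, ss) by Z s ss. *)
definition theorem4p1_lhs :: "nat \<Rightarrow> nat \<Rightarrow> nat \<Rightarrow> real \<Rightarrow> (nat \<Rightarrow> int list \<Rightarrow> real) \<Rightarrow> real" where
  "theorem4p1_lhs m k p L Z =
     (-1) ^ (m + 1) * (\<Sum>i = 0..m. L ^ i / fact i * Z 1 (replicate (m - i) 1 @ int (p + 3) # replicate k 1))
   + (-1) ^ (p + k + 1) * (\<Sum>i = 0..k. L ^ i / fact i * Z 1 (replicate (k - i) 1 @ int (p + 3) # replicate m 1))"

definition theorem4p1_rhs :: "nat \<Rightarrow> nat \<Rightarrow> nat \<Rightarrow> real \<Rightarrow> (nat \<Rightarrow> int list \<Rightarrow> real) \<Rightarrow> real" where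
  "theorem4p1_rhs m k p L Z =
     (-1) ^ m * (L ^ Suc m / fact (Suc m) * Z (p + 3) (replicate k 1))
   + (-1) ^ (p + k) * (L ^ Suc k / fact (Suc k) * Z (p + 3) (replicate m 1))
   + (\<Sum>i = 0..p. (-1) ^ i * Z (i + 2) (replicate m 1) * Z (p + 2 - i) (replicate k 1))"

lemma has_field_derivative_theorem4p1_lhs:
  assumes "0 < t" "t < 1"
  shows "((\<lambda>x. theorem4p1_lhs m k p (ln (1 + x)) (\<lambda>s ss. alt_mzv_gen s ss x)) has_field_derivative
      ((-1) ^ m * (ln (1 + t) ^ m / fact m * alt_mzv_gen (p + 3) (replicate k 1) t)
       + (-1) ^ (p + k) * (ln (1 + t) ^ k / fact k * alt_mzv_gen (p + 3) (replicate m 1) t)) / (1 + t))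
      (at t)"
proof -
  have "\<bar>t\<bar> < 1"
    using assms by simp
  then have "((\<lambda>x. theorem4p1_lhs m k p (ln (1 + x)) (\<lambda>s ss. alt_mzv_gen s ss x)) has_field_derivative
      (-1) ^ (m + 1) * - (ln (1 + t) ^ m / fact m * alt_mzv_gen (p + 3) (replicate k 1) t / (1 + t))
      + (-1) ^ (p + k + 1) * - (ln (1 + t) ^ k / fact k * alt_mzv_gen (p + 3) (replicate m 1) t / (1 + t)))
      (at t)"
    unfolding theorem4p1_lhs_def
    by (intro DERIV_add DERIV_cmult has_field_derivative_ln_weighted_alt_mzv_sum) auto
  then show ?thesis
    by (simp add: add_divide_distrib)
qed

lemma has_field_derivative_theorem4p1_rhs:
  assumes "0 < t" "t < 1"
  shows "((\<lambda>x. theorem4p1_rhs m k p (ln (1 + x)) (\<lambda>s ss. alt_mzv_gen s ss x)) has_field_derivative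
      ((-1) ^ m * (ln (1 + t) ^ m / fact m * alt_mzv_gen (p + 3) (replicate k 1) t)
       + (-1) ^ (p + k) * (ln (1 + t) ^ k / fact k * alt_mzv_gen (p + 3) (replicate m 1) t)) / (1 + t))
      (at t)"
proof -
  have "Suc (p + 2) = p + 3" "1 \<le> p + 2"
    by simp_all
  note power_term = has_field_derivative_ln_power_times_alt_mzv_gen[OF _ this(2) assms, unfolded this(1)]
  note D = DERIV_add[OF DERIV_add[OF
        DERIV_cmult[OF power_term[of "replicate k 1" m], of "(-1) ^ m"]
        DERIV_cmult[OF power_term[of "replicate m 1" k], of "(-1) ^ (p + k)"]]
      has_field_derivative_alt_mzv_gen_convolution[OF _ _ assms, of "replicate m 1" "replicate k 1" p]]
  show ?thesis
    unfolding theorem4p1_rhs_def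
  proof (rule DERIV_cong[OF D])
    show "(-1) ^ m * (ln (1 + t) ^ m / fact m * alt_mzv_gen (p + 3) (replicate k 1) t / (1 + t)
          + ln (1 + t) ^ Suc m / fact (Suc m) * alt_mzv_gen (p + 2) (replicate k 1) t / t)
        + (-1) ^ (p + k) * (ln (1 + t) ^ k / fact k * alt_mzv_gen (p + 3) (replicate m 1) t / (1 + t)
          + ln (1 + t) ^ Suc k / fact (Suc k) * alt_mzv_gen (p + 2) (replicate m 1) t / t)
        + (alt_mzv_gen 1 (replicate m 1) t * alt_mzv_gen (p + 2) (replicate k 1) t
          + (-1) ^ p * alt_mzv_gen (p + 2) (replicate m 1) t * alt_mzv_gen 1 (replicate k 1) t) / t
      = ((-1) ^ m * (ln (1 + t) ^ m / fact m * alt_mzv_gen (p + 3) (replicate k 1) t)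
        + (-1) ^ (p + k) * (ln (1 + t) ^ k / fact k * alt_mzv_gen (p + 3) (replicate m 1) t)) / (1 + t)"
    proof -
      \<comment> \<open>Evaluating the two \<open>alt_mzv_gen 1\<close> factors, the \<open>1 / t\<close> terms cancel.\<close>
      have neg: "(- ln (1 + t)) ^ Suc n / fact (Suc n) = - ((-1) ^ n * (ln (1 + t) ^ Suc n / fact (Suc n)))" for n
        by (subst power_minus) simp
      have "alt_mzv_gen 1 (replicate m 1) t = (- ln (1 + t)) ^ Suc m / fact (Suc m)"
        and "alt_mzv_gen 1 (replicate k 1) t = (- ln (1 + t)) ^ Suc k / fact (Suc k)"
        using alt_mzv_gen_1_ones assms by auto
      then show ?thesis
        by (simp only: neg power_add add_divide_distrib times_divide_eq_left) (simp add: algebra_simps)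
    qed
  qed auto
qed

lemma theorem4p1_alt_mzv_gen:
  assumes "0 \<le> t" "t < 1"
  shows "theorem4p1_lhs m k p (ln (1 + t)) (\<lambda>s ss. alt_mzv_gen s ss t)
       = theorem4p1_rhs m k p (ln (1 + t)) (\<lambda>s ss. alt_mzv_gen s ss t)"
proof (rule eq_if_same_derivative_on_interval[OF assms(1), where D = "\<lambda>x.
    ((-1) ^ m * (ln (1 + x) ^ m / fact m * alt_mzv_gen (p + 3) (replicate k 1) x)
     + (-1) ^ (p + k) * (ln (1 + x) ^ k / fact k * alt_mzv_gen (p + 3) (replicate m 1) x)) / (1 + x)"])
  have "{0..t} \<subseteq> {-1<..<1}"
    using assms by auto
  then show "continuous_on {0..t} (\<lambda>x. theorem4p1_lhs m k p (ln (1 + x)) (\<lambda>s ss. alt_mzv_gen s ss x))"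
    and "continuous_on {0..t} (\<lambda>x. theorem4p1_rhs m k p (ln (1 + x)) (\<lambda>s ss. alt_mzv_gen s ss x))"
    unfolding theorem4p1_lhs_def theorem4p1_rhs_def
    by (intro continuous_intros continuous_on_alt_mzv_gen; force)+
qed (use has_field_derivative_theorem4p1_lhs has_field_derivative_theorem4p1_rhs assms in
     \<open>auto simp: theorem4p1_lhs_def theorem4p1_rhs_def\<close>)

lemma theorem4p1_mzv:
  defines "Z \<equiv> \<lambda>s ss. mzv (- int s # ss)"
  shows "theorem4p1_lhs m k p (ln 2) Z = theorem4p1_rhs m k p (ln 2) Z"
proof -
  have "((\<lambda>t. 1 + t) \<longlongrightarrow> 2) (at_left (1::real))"
    by (rule tendsto_eq_intros) (auto intro: tendsto_ident_at)
  then have ln_limit: "((\<lambda>t. ln (1 + t)) \<longlongrightarrow> ln 2) (at_left (1::real))"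
    by (rule tendsto_ln) simp
  have lhs_limit: "((\<lambda>t. theorem4p1_lhs m k p (ln (1 + t)) (\<lambda>s ss. alt_mzv_gen s ss t))
      \<longlongrightarrow> theorem4p1_lhs m k p (ln 2) Z) (at_left 1)"
    unfolding theorem4p1_lhs_def Z_def
    by (intro tendsto_intros ln_limit alt_mzv_gen_tendsto_mzv) auto
  have rhs_limit: "((\<lambda>t. theorem4p1_rhs m k p (ln (1 + t)) (\<lambda>s ss. alt_mzv_gen s ss t))
      \<longlongrightarrow> theorem4p1_rhs m k p (ln 2) Z) (at_left 1)"
    unfolding theorem4p1_rhs_def Z_def
    by (intro tendsto_intros ln_limit alt_mzv_gen_tendsto_mzv) auto
  have "eventually (\<lambda>t. t \<in> {0<..<1}) (at_left (1::real))"
    by (rule eventually_at_left_real) simp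
  then have "eventually (\<lambda>t. theorem4p1_lhs m k p (ln (1 + t)) (\<lambda>s ss. alt_mzv_gen s ss t)
      = theorem4p1_rhs m k p (ln (1 + t)) (\<lambda>s ss. alt_mzv_gen s ss t)) (at_left (1::real))"
    by eventually_elim (simp add: theorem4p1_alt_mzv_gen)
  with lhs_limit have "((\<lambda>t. theorem4p1_rhs m k p (ln (1 + t)) (\<lambda>s ss. alt_mzv_gen s ss t))
      \<longlongrightarrow> theorem4p1_lhs m k p (ln 2) Z) (at_left 1)"
    by (simp add: tendsto_cong)
  with rhs_limit show ?thesis
    by (intro tendsto_unique[OF trivial_limit_at_left_real])
qed

theorem theorem4p1:
  fixes m k p :: nat
  shows "(-1) ^ (m + 1) * (\<Sum>i = 0..m. ln 2 ^ i / fact i *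
            mzv ([-1] @ replicate (m - i) 1 @ [int p + 3] @ replicate k 1))
       + (-1) ^ (p + k + 1) * (\<Sum>i = 0..k. ln 2 ^ i / fact i *
            mzv ([-1] @ replicate (k - i) 1 @ [int p + 3] @ replicate m 1))
     = (-1) ^ m / fact (m + 1) * ln 2 ^ (m + 1) * mzv ([- (int p + 3)] @ replicate k 1)
       + (-1) ^ (p + k) / fact (k + 1) * ln 2 ^ (k + 1) * mzv ([- (int p + 3)] @ replicate m 1)
       + (\<Sum>i = 0..p. (-1) ^ i * mzv ([- (2 + int i)] @ replicate m 1)
                            * mzv ([- (int p + 2 - int i)] @ replicate k 1))"
proof -
  have "(\<Sum>i = 0..p. (-1) ^ i * mzv (- int (i + 2) # replicate m 1) * mzv (- int (p + 2 - i) # replicate k 1))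
      = (\<Sum>i = 0..p. (-1) ^ i * mzv ([- (2 + int i)] @ replicate m 1)
                            * mzv ([- (int p + 2 - int i)] @ replicate k 1))"
    by (intro sum.cong) (auto simp: of_nat_diff add.commute)
  with theorem4p1_mzv[of m k p] show ?thesis
    by (simp add: theorem4p1_lhs_def theorem4p1_rhs_def mult_ac)
qed

end
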